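(* Let $(u_i)_{i\in\mathbb{N}}$ be real numbers with $\sum_{i=1}^M u_i^2>0$ for every $M\in\mathbb{N}$, and suppose there exist $\beta>1$, $\beta'>0$ and $c>0$ (possibly depending on $\beta,\beta'$) such that $$\frac{\sum_{i=B}^M u_i^2}{\sum_{i=1}^M u_i^2}\le\frac{c}{M^{\beta'}}\quad\text{for all }M\in\mathbb{N},\qquad B=\big\lfloor(M^{1/\beta}-1)^\beta\big\rfloor.$$ Let $(E_{ij})_{i,j\in\mathbb{N}}$ be centered i.i.d. real random variables with variance $\sigma^2$ and finite fourth moment, let $E_M:=M^{-1/2}(E_{ij})_{i,j\le M}$, and let $\tilde u_M:=\big(\sum_{i=1}^M u_i^2\big)^{-1/2}(u_1,\dots,u_M)^T$. Then $$\tilde u_M^T E_ME_M^T\tilde u_M\longrightarrow\sigma^2\quad\text{almost surely as }M\to\infty.$$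
   Context: $\lfloor x\rfloor$ is the largest integer $\le x$. *)

theory Defs
  imports "HOL-Probability.Probability"
begin

end

theory Submission
  imports Defs "HOL-Real_Asymp.Real_Asymp"
begin

text \<open>
  Writing \<open>S a = \<Sum>i\<le>a u\<^sub>i\<^sup>2\<close> and \<open>W a b = \<Sum>j\<le>b (\<Sum>i\<le>a u\<^sub>i E\<^sub>i\<^sub>j)\<^sup>2\<close>, the quantity of the
  theorem is \<open>W L L / (L S L)\<close>.  The proof has three layers, developed in this order.
  (1) Moment bounds, for an abstract independent centered family with bounded fourth
  moments: a linear form with weights \<open>w\<close> has fourth moment \<open>O((\<Sum>w\<^sup>2)\<^sup>2)\<close>; hence the
  centered sum of squares of linear forms on disjoint blocks has variance
  \<open>O(\<Sum>\<^sub>j V\<^sub>j\<^sup>2)\<close>, where \<open>V\<^sub>j\<close> is the weight mass of block \<open>j\<close>, and Chebyshev's inequality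
  bounds its deviations.  For the matrix this gives deviation probabilities of order \<open>1/b\<close>
  for \<open>W a b / (b S a)\<close>, and similarly for the energy \<open>H m N\<close> of the rows \<open>m < i \<le> N\<close>.
  (2) Along the sparse grid \<open>\<lfloor>(n+1)\<^sup>g\<rfloor>\<close>, where \<open>\<Sum>1/grid < \<infinity>\<close>, Borel--Cantelli turns these
  bounds into almost sure convergence.
  (3) A deterministic interpolation: for consecutive grid points \<open>m \<le> L \<le> N\<close>,
  \<open>(a + d)\<^sup>2 \<le> (1+t) a\<^sup>2 + (1 + 1/t) d\<^sup>2\<close> and Cauchy--Schwarz sandwich \<open>W L L\<close> between the
  forms at the grid points, up to the tail term \<open>(S N - S m) H m N\<close>; the tail-window
  hypothesis on \<open>u\<close> makes that term negligible, and letting \<open>t \<rightarrow> 0\<close> gives the theorem.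
\<close>

lemma (in prob_space) integrable_power_le_four:
  fixes f :: "'a \<Rightarrow> real"
  assumes "f \<in> borel_measurable M" "integrable M (\<lambda>x. f x ^ 4)" "p \<le> 4"
  shows "integrable M (\<lambda>x. f x ^ p)"
proof (rule Bochner_Integration.integrable_bound[of _ "\<lambda>x. 1 + f x ^ 4"])
  show "integrable M (\<lambda>x. 1 + f x ^ 4)" using assms by auto
  show "(\<lambda>x. f x ^ p) \<in> borel_measurable M" using assms by auto
  show "AE x in M. norm (f x ^ p) \<le> norm (1 + f x ^ 4)"
  proof (intro AE_I2)
    fix x
    have "\<bar>f x\<bar> ^ p \<le> 1 + \<bar>f x\<bar> ^ 4"
    proof (cases "\<bar>f x\<bar> \<le> 1")
      case True
      then have "\<bar>f x\<bar> ^ p \<le> 1" by (simp add: power_le_one)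
      then show ?thesis by (smt (verit) zero_le_power abs_ge_zero)
    next
      case False
      then have "\<bar>f x\<bar> ^ p \<le> \<bar>f x\<bar> ^ 4" using assms(3) by (intro power_increasing) auto
      then show ?thesis by simp
    qed
    then show "norm (f x ^ p) \<le> norm (1 + f x ^ 4)"
      by (simp add: power_abs power_even_abs_numeral)
  qed
qed

lemma (in prob_space) indep_var_disjoint_subfamilies:
  fixes X :: "'k \<Rightarrow> 'a \<Rightarrow> real"
  assumes ind: "indep_vars (\<lambda>_. borel) X K" and AB: "A \<inter> B = {}" "A \<subseteq> K" "B \<subseteq> K"
    and F: "F \<in> borel_measurable (PiM A (\<lambda>_. borel))"
    and G: "G \<in> borel_measurable (PiM B (\<lambda>_. borel))"
  shows "indep_var borel (\<lambda>\<omega>. F (restrict (\<lambda>i. X i \<omega>) A)) borel (\<lambda>\<omega>. G (restrict (\<lambda>i. X i \<omega>) B))"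
  using indep_var_compose[OF indep_var_restrict[OF ind AB] F G] by (simp add: comp_def)

lemma (in prob_space) indep_var_power_product:
  fixes Y Z :: "'a \<Rightarrow> real"
  assumes ind: "indep_var borel Y borel Z"
    and "integrable M (\<lambda>\<omega>. Y \<omega> ^ p)" "integrable M (\<lambda>\<omega>. Z \<omega> ^ q)"
  shows "integrable M (\<lambda>\<omega>. Y \<omega> ^ p * Z \<omega> ^ q)"
    and "expectation (\<lambda>\<omega>. Y \<omega> ^ p * Z \<omega> ^ q)
           = expectation (\<lambda>\<omega>. Y \<omega> ^ p) * expectation (\<lambda>\<omega>. Z \<omega> ^ q)"
proof -
  have "indep_var borel (\<lambda>\<omega>. Y \<omega> ^ p) borel (\<lambda>\<omega>. Z \<omega> ^ q)"
    using indep_var_compose[OF ind, of "\<lambda>x. x ^ p" borel "\<lambda>x. x ^ q" borel]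
    by (simp add: comp_def)
  then show "integrable M (\<lambda>\<omega>. Y \<omega> ^ p * Z \<omega> ^ q)"
    and "expectation (\<lambda>\<omega>. Y \<omega> ^ p * Z \<omega> ^ q)
           = expectation (\<lambda>\<omega>. Y \<omega> ^ p) * expectation (\<lambda>\<omega>. Z \<omega> ^ q)"
    using assms(2,3) by (simp_all add: indep_var_integrable indep_var_lebesgue_integral)
qed

lemma (in prob_space) indep_second_moment_add:
  fixes Y Z :: "'a \<Rightarrow> real"
  assumes ind: "indep_var borel Y borel Z"
    and Y: "Y \<in> borel_measurable M" "integrable M (\<lambda>\<omega>. Y \<omega> ^ 2)"
    and Z: "Z \<in> borel_measurable M" "integrable M (\<lambda>\<omega>. Z \<omega> ^ 2)" "expectation Z = 0"
  shows "integrable M (\<lambda>\<omega>. (Y \<omega> + Z \<omega>) ^ 2)"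
    and "expectation (\<lambda>\<omega>. (Y \<omega> + Z \<omega>) ^ 2)
           = expectation (\<lambda>\<omega>. Y \<omega> ^ 2) + expectation (\<lambda>\<omega>. Z \<omega> ^ 2)"
proof -
  have iY: "integrable M (\<lambda>\<omega>. Y \<omega> ^ 1)" and iZ: "integrable M (\<lambda>\<omega>. Z \<omega> ^ 1)"
    using square_integrable_imp_integrable Y Z by simp_all
  note YZ = indep_var_power_product[OF ind iY iZ]
  have expand: "(\<lambda>\<omega>. (Y \<omega> + Z \<omega>) ^ 2) = (\<lambda>\<omega>. Y \<omega> ^ 2 + 2 * (Y \<omega> ^ 1 * Z \<omega> ^ 1) + Z \<omega> ^ 2)"
    by (simp add: power2_eq_square algebra_simps)
  show "integrable M (\<lambda>\<omega>. (Y \<omega> + Z \<omega>) ^ 2)"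
    unfolding expand using Y Z YZ by auto
  show "expectation (\<lambda>\<omega>. (Y \<omega> + Z \<omega>) ^ 2)
           = expectation (\<lambda>\<omega>. Y \<omega> ^ 2) + expectation (\<lambda>\<omega>. Z \<omega> ^ 2)"
    unfolding expand using Y Z YZ by simp
qed

lemma (in prob_space) indep_fourth_moment_add:
  fixes Y Z :: "'a \<Rightarrow> real"
  assumes ind: "indep_var borel Y borel Z"
    and Y: "Y \<in> borel_measurable M" "integrable M (\<lambda>\<omega>. Y \<omega> ^ 4)" "expectation Y = 0"
    and Z: "Z \<in> borel_measurable M" "integrable M (\<lambda>\<omega>. Z \<omega> ^ 4)" "expectation Z = 0"
  shows "integrable M (\<lambda>\<omega>. (Y \<omega> + Z \<omega>) ^ 4)"
    and "expectation (\<lambda>\<omega>. (Y \<omega> + Z \<omega>) ^ 4) = expectation (\<lambda>\<omega>. Y \<omega> ^ 4)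
           + 6 * (expectation (\<lambda>\<omega>. Y \<omega> ^ 2) * expectation (\<lambda>\<omega>. Z \<omega> ^ 2))
           + expectation (\<lambda>\<omega>. Z \<omega> ^ 4)"
proof -
  have iY: "p \<le> 4 \<Longrightarrow> integrable M (\<lambda>\<omega>. Y \<omega> ^ p)" for p
    using integrable_power_le_four[OF Y(1,2)] .
  have iZ: "q \<le> 4 \<Longrightarrow> integrable M (\<lambda>\<omega>. Z \<omega> ^ q)" for q
    using integrable_power_le_four[OF Z(1,2)] .
  note prod = indep_var_power_product[OF ind iY iZ]
  have expand: "(\<lambda>\<omega>. (Y \<omega> + Z \<omega>) ^ 4) = (\<lambda>\<omega>. Y \<omega> ^ 4 + 4 * (Y \<omega> ^ 3 * Z \<omega> ^ 1)
      + 6 * (Y \<omega> ^ 2 * Z \<omega> ^ 2) + 4 * (Y \<omega> ^ 1 * Z \<omega> ^ 3) + Z \<omega> ^ 4)"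
    by (simp add: algebra_simps power2_eq_square power4_eq_xxxx eval_nat_numeral)
  show "integrable M (\<lambda>\<omega>. (Y \<omega> + Z \<omega>) ^ 4)"
    unfolding expand using prod[of 3 1] prod[of 2 2] prod[of 1 3] iY[of 4] iZ[of 4] by simp
  show "expectation (\<lambda>\<omega>. (Y \<omega> + Z \<omega>) ^ 4) = expectation (\<lambda>\<omega>. Y \<omega> ^ 4)
           + 6 * (expectation (\<lambda>\<omega>. Y \<omega> ^ 2) * expectation (\<lambda>\<omega>. Z \<omega> ^ 2))
           + expectation (\<lambda>\<omega>. Z \<omega> ^ 4)"
    unfolding expand using prod[of 3 1] prod[of 2 2] prod[of 1 3] iY[of 4] iZ[of 4] Y(3) Z(3)
    by simp
qed

text \<open>Borel--Cantelli: deviation probabilities that are summable for every tolerance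
  (complete convergence) imply almost sure convergence.\<close>
lemma (in prob_space) AE_tendsto_of_summable_deviation:
  fixes Y :: "nat \<Rightarrow> 'a \<Rightarrow> real"
  assumes Ym[measurable]: "\<And>n. Y n \<in> borel_measurable M"
    and p: "summable p"
    and dev: "\<And>e n. e > 0 \<Longrightarrow> prob {\<omega> \<in> space M. e \<le> \<bar>Y n \<omega> - l\<bar>} \<le> K e * p n"
  shows "AE \<omega> in M. (\<lambda>n. Y n \<omega>) \<longlonglongrightarrow> l"
proof -
  have AE_close: "AE \<omega> in M. eventually (\<lambda>n. \<bar>Y n \<omega> - l\<bar> < e) sequentially" if e: "e > 0" for e
  proof -
    define A where "A n = {\<omega> \<in> space M. e \<le> \<bar>Y n \<omega> - l\<bar>}" for n
    have [measurable]: "A n \<in> sets M" for n unfolding A_def by measurable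
    have "summable (\<lambda>n. measure M (A n))"
      using dev[OF e] unfolding A_def
      by (intro summable_comparison_test[OF _ summable_mult[OF p, of "K e"]]) auto
    then have "AE \<omega> in M. eventually (\<lambda>n. \<omega> \<in> space M - A n) sequentially"
      by (intro borel_cantelli_AE1) (auto simp: less_top[symmetric])
    then show ?thesis
      by (rule AE_mp) (auto intro!: AE_I2 elim!: eventually_mono simp: A_def)
  qed
  have "AE \<omega> in M. \<forall>k::nat. eventually (\<lambda>n. \<bar>Y n \<omega> - l\<bar> < 1 / Suc k) sequentially"
    using AE_close by (simp add: AE_all_countable)
  then show ?thesis
  proof (rule AE_mp, intro AE_I2 impI)
    fix \<omega> assume close: "\<forall>k::nat. eventually (\<lambda>n. \<bar>Y n \<omega> - l\<bar> < 1 / Suc k) sequentially"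
    show "(\<lambda>n. Y n \<omega>) \<longlonglongrightarrow> l"
    proof (rule tendstoI)
      fix r :: real assume "r > 0"
      then obtain k where "1 / Suc k < r" using nat_approx_posE by blast
      then show "eventually (\<lambda>n. dist (Y n \<omega>) l < r) sequentially"
        using close[rule_format, of k] by (auto elim!: eventually_mono simp: dist_real_def)
    qed
  qed
qed

lemma identically_distributed_integral:
  fixes X Y :: "'a \<Rightarrow> real" and h :: "real \<Rightarrow> real"
  assumes X: "X \<in> borel_measurable M" and Y: "Y \<in> borel_measurable M"
    and same: "distr M borel X = distr M borel Y"
    and h: "h \<in> borel_measurable borel" and int: "integrable M (\<lambda>x. h (Y x))"
  shows "integrable M (\<lambda>x. h (X x))" "integral\<^sup>L M (\<lambda>x. h (X x)) = integral\<^sup>L M (\<lambda>x. h (Y x))"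
proof -
  show "integrable M (\<lambda>x. h (X x))"
    using int integrable_distr_eq[OF X h] integrable_distr_eq[OF Y h] same by simp
  show "integral\<^sup>L M (\<lambda>x. h (X x)) = integral\<^sup>L M (\<lambda>x. h (Y x))"
    using integral_distr[OF X h] integral_distr[OF Y h] same by simp
qed

text \<open>An independent family of centered variables with common second moment \<open>s\<close> and
  fourth moments bounded by \<open>m4\<close>.\<close>
locale centered_indep_family = prob_space +
  fixes X :: "'k \<Rightarrow> 'a \<Rightarrow> real" and K :: "'k set" and s m4 :: real
  assumes indep: "indep_vars (\<lambda>_. borel) X K"
    and integrable4: "\<And>k. k \<in> K \<Longrightarrow> integrable M (\<lambda>\<omega>. X k \<omega> ^ 4)"
    and centered: "\<And>k. k \<in> K \<Longrightarrow> expectation (X k) = 0"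
    and second_moment: "\<And>k. k \<in> K \<Longrightarrow> expectation (\<lambda>\<omega>. X k \<omega> ^ 2) = s"
    and fourth_moment: "\<And>k. k \<in> K \<Longrightarrow> expectation (\<lambda>\<omega>. X k \<omega> ^ 4) \<le> m4"
begin

definition C4 :: real where "C4 = max m4 (3 * s^2)"

lemma measurable_X [measurable]: "k \<in> K \<Longrightarrow> X k \<in> borel_measurable M"
  using indep unfolding indep_vars_def by auto

lemma measurable_linear_form [measurable]:
  "F \<subseteq> K \<Longrightarrow> (\<lambda>\<omega>. \<Sum>k\<in>F. w k * X k \<omega>) \<in> borel_measurable M"
  by (intro borel_measurable_sum borel_measurable_times borel_measurable_const measurable_X) auto

lemma borel_measurable_linear_form_PiM:
  assumes "F \<subseteq> A"
  shows "(\<lambda>f. \<Sum>k\<in>F. w k * f k) \<in> borel_measurable (PiM A (\<lambda>_. borel::real measure))"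
  using assms by (intro borel_measurable_sum borel_measurable_times borel_measurable_const
      measurable_component_singleton) auto

lemma sum_restrict: "(\<Sum>k\<in>A. w k * restrict f A k) = (\<Sum>k\<in>A. w k * f k)"
  by (rule sum.cong) auto

text \<open>The choice of \<open>C4\<close> makes the fourth-moment bound stable under adding one more
  summand with weight \<open>a\<close> to a linear form of weight mass \<open>V\<close>.\<close>
lemma C4_absorbs_increment:
  assumes "0 \<le> V"
  shows "C4 * V^2 + 6 * (s * V * (a^2 * s)) + a^4 * m4 \<le> C4 * (V + a^2)^2"
proof -
  have "(6 * s^2) * (V * a^2) \<le> (2 * C4) * (V * a^2)"
    using assms unfolding C4_def by (intro mult_right_mono) auto
  moreover have "a^4 * m4 \<le> a^4 * C4" unfolding C4_def by (simp add: mult_left_mono)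
  ultimately have "C4 * V^2 + 6 * (s * V * (a^2 * s)) + a^4 * m4
      \<le> C4 * V^2 + 2 * C4 * V * a^2 + C4 * a^4"
    by (simp add: power2_eq_square algebra_simps)
  also have "\<dots> = C4 * (V + a^2)^2" by (simp add: power2_eq_square power4_eq_xxxx algebra_simps)
  finally show ?thesis .
qed

lemma linear_form_moments:
  assumes "finite F" "F \<subseteq> K"
  shows "integrable M (\<lambda>\<omega>. (\<Sum>k\<in>F. w k * X k \<omega>) ^ 4) \<and>
    expectation (\<lambda>\<omega>. \<Sum>k\<in>F. w k * X k \<omega>) = 0 \<and>
    expectation (\<lambda>\<omega>. (\<Sum>k\<in>F. w k * X k \<omega>) ^ 2) = s * (\<Sum>k\<in>F. (w k)^2) \<and>
    expectation (\<lambda>\<omega>. (\<Sum>k\<in>F. w k * X k \<omega>) ^ 4) \<le> C4 * (\<Sum>k\<in>F. (w k)^2)^2"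
  using assms
proof (induction F rule: finite_induct)
  case empty
  then show ?case by (simp add: C4_def)
next
  case (insert k F)
  define Y where "Y = (\<lambda>\<omega>. \<Sum>k\<in>F. w k * X k \<omega>)"
  define Z where "Z = (\<lambda>\<omega>. w k * X k \<omega>)"
  define V where "V = (\<Sum>k\<in>F. (w k)^2)"
  have kK: "k \<in> K" and FK: "F \<subseteq> K" using insert by auto
  from insert.IH[OF FK] have IH: "integrable M (\<lambda>\<omega>. Y \<omega> ^ 4)" "expectation Y = 0"
      "expectation (\<lambda>\<omega>. Y \<omega> ^ 2) = s * V" "expectation (\<lambda>\<omega>. Y \<omega> ^ 4) \<le> C4 * V^2"
    unfolding Y_def V_def by auto
  have Ym: "Y \<in> borel_measurable M" and Zm: "Z \<in> borel_measurable M"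
    unfolding Y_def Z_def using FK kK by measurable
  have iX: "p \<le> 4 \<Longrightarrow> integrable M (\<lambda>\<omega>. X k \<omega> ^ p)" for p
    using integrable_power_le_four[OF measurable_X integrable4] kK by blast
  have Z: "integrable M (\<lambda>\<omega>. Z \<omega> ^ 4)" "expectation Z = 0"
      "expectation (\<lambda>\<omega>. Z \<omega> ^ 2) = (w k)^2 * s" "expectation (\<lambda>\<omega>. Z \<omega> ^ 4) \<le> (w k)^4 * m4"
    using iX[of 4] centered[OF kK] second_moment[OF kK] fourth_moment[OF kK]
    by (simp_all add: Z_def power_mult_distrib mult_left_mono)
  have "indep_var borel (\<lambda>\<omega>. (\<lambda>f. \<Sum>k\<in>F. w k * f k) (restrict (\<lambda>i. X i \<omega>) F))
      borel (\<lambda>\<omega>. (\<lambda>f. \<Sum>k\<in>{k}. w k * f k) (restrict (\<lambda>i. X i \<omega>) {k}))"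
    using insert(2) kK FK
    by (intro indep_var_disjoint_subfamilies[OF indep] borel_measurable_linear_form_PiM) auto
  then have ind: "indep_var borel Y borel Z" by (simp add: Y_def Z_def sum_restrict)
  note fourth = indep_fourth_moment_add[OF ind Ym IH(1,2) Zm Z(1,2)]
  have second: "expectation (\<lambda>\<omega>. (Y \<omega> + Z \<omega>) ^ 2) = s * V + (w k)^2 * s"
    using indep_second_moment_add[OF ind Ym _ Zm _ Z(2)] IH(3) Z(3)
      integrable_power_le_four[OF Ym IH(1), of 2] integrable_power_le_four[OF Zm Z(1), of 2]
    by simp
  have "expectation (\<lambda>\<omega>. (Y \<omega> + Z \<omega>) ^ 4) \<le> C4 * V^2 + 6 * (s * V * ((w k)^2 * s)) + (w k)^4 * m4"
    unfolding fourth(2) IH(3) Z(3) using IH(4) Z(4) by linarith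
  also have "\<dots> \<le> C4 * (V + (w k)^2)^2"
    by (rule C4_absorbs_increment) (simp add: V_def sum_nonneg)
  finally have "expectation (\<lambda>\<omega>. (Y \<omega> + Z \<omega>) ^ 4) \<le> C4 * (V + (w k)^2)^2" .
  moreover have "expectation (\<lambda>\<omega>. Y \<omega> + Z \<omega>) = 0"
    using IH(2) Z(2) integrable_power_le_four[OF Ym IH(1), of 1]
      integrable_power_le_four[OF Zm Z(1), of 1] by simp
  moreover have "(\<Sum>k\<in>insert k F. w k * X k \<omega>) = Y \<omega> + Z \<omega>" for \<omega>
    unfolding Y_def Z_def using insert(1,2) by simp
  moreover have "(\<Sum>k\<in>insert k F. (w k)^2) = V + (w k)^2"
    unfolding V_def using insert(1,2) by simp
  ultimately show ?case using fourth(1) second by (simp add: algebra_simps)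
qed

lemma centered_square_moments:
  fixes w :: "'k \<Rightarrow> real"
  assumes "finite F" "F \<subseteq> K"
  defines "V \<equiv> \<Sum>k\<in>F. (w k)^2"
  defines "Z \<equiv> \<lambda>\<omega>. (\<Sum>k\<in>F. w k * X k \<omega>)^2 - s * V"
  shows "integrable M (\<lambda>\<omega>. Z \<omega> ^ 2)" "expectation Z = 0"
    "expectation (\<lambda>\<omega>. Z \<omega> ^ 2) \<le> C4 * V^2"
proof -
  define Y where "Y = (\<lambda>\<omega>. \<Sum>k\<in>F. w k * X k \<omega>)"
  have Y: "integrable M (\<lambda>\<omega>. Y \<omega> ^ 4)" "expectation (\<lambda>\<omega>. Y \<omega> ^ 2) = s * V"
      "expectation (\<lambda>\<omega>. Y \<omega> ^ 4) \<le> C4 * V^2"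
    using linear_form_moments[OF assms(1,2), of w] unfolding Y_def V_def by auto
  have Ym: "Y \<in> borel_measurable M" unfolding Y_def using assms(2) by measurable
  have iY2: "integrable M (\<lambda>\<omega>. Y \<omega> ^ 2)" using integrable_power_le_four[OF Ym Y(1)] by auto
  have Z_sq: "(\<lambda>\<omega>. Z \<omega> ^ 2) = (\<lambda>\<omega>. Y \<omega> ^ 4 - 2 * (s * V) * Y \<omega> ^ 2 + (s * V)^2)"
    unfolding Z_def Y_def by (auto simp: power2_eq_square power4_eq_xxxx algebra_simps)
  show "integrable M (\<lambda>\<omega>. Z \<omega> ^ 2)" unfolding Z_sq using Y(1) iY2 by auto
  have "expectation (\<lambda>\<omega>. Z \<omega> ^ 2) = expectation (\<lambda>\<omega>. Y \<omega> ^ 4) - (s * V)^2"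
    unfolding Z_sq using Y iY2 by (simp add: prob_space power2_eq_square)
  then show "expectation (\<lambda>\<omega>. Z \<omega> ^ 2) \<le> C4 * V^2" using Y(3) by (smt (verit) zero_le_power2)
  show "expectation Z = 0" unfolding Z_def using iY2 Y(2) by (simp add: prob_space Y_def)
qed

definition block_deviation :: "('k \<Rightarrow> real) \<Rightarrow> ('j \<Rightarrow> 'k set) \<Rightarrow> 'j set \<Rightarrow> 'a \<Rightarrow> real" where
  "block_deviation w Cs J \<omega> = (\<Sum>j\<in>J. (\<Sum>k\<in>Cs j. w k * X k \<omega>)^2 - s * (\<Sum>k\<in>Cs j. (w k)^2))"

lemma measurable_block_deviation [measurable]:
  "(\<And>j. j \<in> J \<Longrightarrow> Cs j \<subseteq> K) \<Longrightarrow> block_deviation w Cs J \<in> borel_measurable M"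
  unfolding block_deviation_def by measurable auto

lemma block_deviation_indep_block:
  assumes disj: "(\<Union>i\<in>J. Cs i) \<inter> B = {}" and CsJ: "\<And>i. i \<in> J \<Longrightarrow> Cs i \<subseteq> K" and B: "B \<subseteq> K"
  shows "indep_var borel (block_deviation w Cs J) borel (\<lambda>\<omega>. (\<Sum>k\<in>B. w k * X k \<omega>)^2 - c)"
proof -
  define FR where "FR = (\<lambda>f. \<Sum>i\<in>J. (\<Sum>k\<in>Cs i. w k * f k)^2 - s * (\<Sum>k\<in>Cs i. (w k)^2))"
  define FB where "FB = (\<lambda>f. (\<Sum>k\<in>B. w k * f k)^2 - c)"
  have "indep_var borel (\<lambda>\<omega>. FR (restrict (\<lambda>i. X i \<omega>) (\<Union>i\<in>J. Cs i)))
      borel (\<lambda>\<omega>. FB (restrict (\<lambda>i. X i \<omega>) B))"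
    unfolding FR_def FB_def using disj CsJ B
    by (intro indep_var_disjoint_subfamilies[OF indep] borel_measurable_sum borel_measurable_diff
        borel_measurable_power borel_measurable_const borel_measurable_linear_form_PiM) auto
  moreover have "FR (restrict (\<lambda>i. X i \<omega>) (\<Union>i\<in>J. Cs i)) = block_deviation w Cs J \<omega>" for \<omega>
    unfolding FR_def block_deviation_def
    by (intro sum.cong refl arg_cong2[where f="(-)"] arg_cong[where f="\<lambda>x. x^2"]) auto
  moreover have "FB (restrict (\<lambda>i. X i \<omega>) B) = (\<Sum>k\<in>B. w k * X k \<omega>)^2 - c" for \<omega>
    unfolding FB_def by (simp add: sum_restrict)
  ultimately show ?thesis by simp
qed

text \<open>The block deviation is centered and its variance is at most
  \<open>C4 * \<Sum>j (\<Sum>k\<in>Cs j. w\<^sup>2)\<^sup>2\<close>: blocks are independent, so variances add.\<close>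
lemma block_deviation_moments:
  assumes "finite J" "\<And>j. j \<in> J \<Longrightarrow> finite (Cs j) \<and> Cs j \<subseteq> K" "disjoint_family_on Cs J"
  shows "integrable M (\<lambda>\<omega>. block_deviation w Cs J \<omega> ^ 2) \<and>
     expectation (block_deviation w Cs J) = 0 \<and>
     expectation (\<lambda>\<omega>. block_deviation w Cs J \<omega> ^ 2) \<le> C4 * (\<Sum>j\<in>J. (\<Sum>k\<in>Cs j. (w k)^2)^2)"
  using assms
proof (induction J rule: finite_induct)
  case empty
  then show ?case by (simp add: block_deviation_def)
next
  case (insert j J)
  define R where "R = block_deviation w Cs J"
  define V where "V = (\<Sum>k\<in>Cs j. (w k)^2)"
  define Z where "Z = (\<lambda>\<omega>. (\<Sum>k\<in>Cs j. w k * X k \<omega>)^2 - s * V)"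
  have CsJ: "\<And>i. i \<in> J \<Longrightarrow> Cs i \<subseteq> K" and Cj: "finite (Cs j)" "Cs j \<subseteq> K"
    using insert(4) by auto
  from insert.IH insert(4,5) have IH: "integrable M (\<lambda>\<omega>. R \<omega> ^ 2)" "expectation R = 0"
      "expectation (\<lambda>\<omega>. R \<omega> ^ 2) \<le> C4 * (\<Sum>j\<in>J. (\<Sum>k\<in>Cs j. (w k)^2)^2)"
    unfolding R_def by (auto simp: disjoint_family_on_def)
  have Zm: "Z \<in> borel_measurable M" and Rm: "R \<in> borel_measurable M"
    unfolding Z_def R_def using Cj CsJ by measurable
  have iZ2: "integrable M (\<lambda>\<omega>. Z \<omega> ^ 2)" and EZ: "expectation Z = 0"
    and EZ2: "expectation (\<lambda>\<omega>. Z \<omega> ^ 2) \<le> C4 * V^2"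
    using centered_square_moments[OF Cj, of w] unfolding Z_def V_def by auto
  have disj: "(\<Union>i\<in>J. Cs i) \<inter> Cs j = {}"
    using insert(2,5) unfolding disjoint_family_on_def by fastforce
  have ind: "indep_var borel R borel Z"
    unfolding R_def Z_def using disj CsJ Cj by (intro block_deviation_indep_block)
  note sum = indep_second_moment_add[OF ind Rm IH(1) Zm iZ2 EZ]
  have "block_deviation w Cs (insert j J) \<omega> = R \<omega> + Z \<omega>" for \<omega>
    unfolding R_def Z_def V_def block_deviation_def using insert(1,2) by simp
  moreover have "(\<Sum>i\<in>insert j J. (\<Sum>k\<in>Cs i. (w k)^2)^2) = V^2 + (\<Sum>i\<in>J. (\<Sum>k\<in>Cs i. (w k)^2)^2)"
    unfolding V_def using insert(1,2) by simp
  moreover have "expectation (\<lambda>\<omega>. R \<omega> + Z \<omega>) = 0"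
    using IH(2) EZ square_integrable_imp_integrable[OF Rm IH(1)]
      square_integrable_imp_integrable[OF Zm iZ2] by simp
  ultimately show ?case using sum IH(3) EZ2 by (simp add: distrib_left)
qed

lemma block_chebyshev:
  assumes "finite J" "\<And>j. j \<in> J \<Longrightarrow> finite (Cs j) \<and> Cs j \<subseteq> K" "disjoint_family_on Cs J"
    and e: "e > 0" and V: "V = (\<Sum>j\<in>J. \<Sum>k\<in>Cs j. (w k)^2)" "V > 0"
  shows "prob {\<omega> \<in> space M. e \<le> \<bar>(\<Sum>j\<in>J. (\<Sum>k\<in>Cs j. w k * X k \<omega>)^2) / V - s\<bar>}
     \<le> C4 * (\<Sum>j\<in>J. (\<Sum>k\<in>Cs j. (w k)^2)^2) / (e * V)^2"
proof -
  define R where "R = block_deviation w Cs J"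
  have R: "integrable M (\<lambda>\<omega>. R \<omega> ^ 2)" "expectation R = 0"
      "expectation (\<lambda>\<omega>. R \<omega> ^ 2) \<le> C4 * (\<Sum>j\<in>J. (\<Sum>k\<in>Cs j. (w k)^2)^2)"
    using block_deviation_moments[OF assms(1-3), of w] unfolding R_def by auto
  have Rm: "R \<in> borel_measurable M"
    unfolding R_def using assms(2) by (intro measurable_block_deviation) blast
  have "\<bar>(\<Sum>j\<in>J. (\<Sum>k\<in>Cs j. w k * X k \<omega>)^2) / V - s\<bar> = \<bar>R \<omega>\<bar> / V" for \<omega>
  proof -
    have "R \<omega> = (\<Sum>j\<in>J. (\<Sum>k\<in>Cs j. w k * X k \<omega>)^2) - s * V"
      unfolding R_def block_deviation_def V(1) by (simp add: sum_subtractf sum_distrib_left)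
    moreover have "q / V - s = (q - s * V) / V" for q using V(2) by (simp add: field_simps)
    ultimately show ?thesis using V(2) by (simp add: abs_divide)
  qed
  then have "{\<omega> \<in> space M. e \<le> \<bar>(\<Sum>j\<in>J. (\<Sum>k\<in>Cs j. w k * X k \<omega>)^2) / V - s\<bar>}
      = {\<omega> \<in> space M. e * V \<le> \<bar>R \<omega> - expectation R\<bar>}"
    using V(2) R(2) by (auto simp: le_divide_eq)
  also have "prob \<dots> \<le> variance R / (e * V)^2"
    using Chebyshev_inequality[OF Rm R(1)] e V(2) by simp
  also have "\<dots> \<le> C4 * (\<Sum>j\<in>J. (\<Sum>k\<in>Cs j. (w k)^2)^2) / (e * V)^2"
    using R(2,3) by (simp add: divide_right_mono)
  finally show ?thesis .
qed

end

lemma powr_mvt: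
  fixes x r :: real assumes "1 \<le> x"
  shows "\<exists>z. x < z \<and> z < x + 1 \<and> (x+1) powr r - x powr r = r * z powr (r - 1)"
proof -
  have "\<exists>z. x < z \<and> z < x + 1 \<and> (x+1) powr r - x powr r = ((x+1) - x) * (r * z powr (r - 1))"
    by (rule MVT2) (use assms in \<open>auto intro!: has_real_derivative_powr\<close>)
  then show ?thesis by simp
qed

text \<open>For \<open>r \<ge> 1\<close> unit steps increase \<open>x powr r\<close> by at least one (so the grid is
  strictly increasing) and by at most \<open>r (x+1)\<^sup>r\<^sup>-\<^sup>1\<close> (bounding its gaps).\<close>
lemma powr_step_ge: fixes x r :: real assumes "1 \<le> x" "1 \<le> r"
  shows "(x+1) powr r - x powr r \<ge> 1"
proof -
  obtain z where z: "x < z" "(x+1) powr r - x powr r = r * z powr (r - 1)" using powr_mvt[OF assms(1)] by auto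
  have "z powr (r-1) \<ge> 1" using z assms by (intro ge_one_powr_ge_zero) auto
  then have "r * z powr (r-1) \<ge> 1 * 1" using assms by (intro mult_mono) auto
  then show ?thesis using z by simp
qed

lemma powr_step_le: fixes x r :: real assumes "1 \<le> x" "1 \<le> r"
  shows "(x+1) powr r - x powr r \<le> r * (x+1) powr (r-1)"
proof -
  obtain z where z: "x < z" "z < x+1" "(x+1) powr r - x powr r = r * z powr (r - 1)" using powr_mvt[OF assms(1)] by auto
  have "z powr (r-1) \<le> (x+1) powr (r-1)" using z assms by (intro powr_mono2) auto
  then show ?thesis using z assms by (simp add: mult_left_mono)
qed

lemma powr_step_sub: fixes x r :: real assumes "1 \<le> x" "0 < r" "r \<le> 1"
  shows "(x+1) powr r \<le> x powr r + 1"
proof -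
  obtain z where z: "x < z" "(x+1) powr r - x powr r = r * z powr (r - 1)" using powr_mvt[OF assms(1)] by auto
  have "z powr (r-1) \<le> z powr 0" using z assms by (intro powr_mono) auto
  then have "z powr (r-1) \<le> 1" using z assms by simp
  then have "r * z powr (r-1) \<le> 1 * 1" using assms by (intro mult_mono) auto
  then show ?thesis using z by simp
qed

text \<open>The polynomially sparse subsequence \<open>\<lfloor>(n+1)\<^sup>g\<rfloor>\<close> (\<open>g > 1\<close>) along which the
  Borel--Cantelli argument is run: it is sparse enough for \<open>\<Sum>1/grid g n < \<infinity>\<close>,
  yet dense enough that consecutive terms have ratio tending to one.\<close>
definition grid :: "real \<Rightarrow> nat \<Rightarrow> nat" where "grid g n = nat \<lfloor>(real n + 1) powr g\<rfloor>"

context fixes g :: real assumes g1: "g > 1"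
begin

lemma grid_bounds: "(real n + 1) powr g - 1 < real (grid g n)" "real (grid g n) \<le> (real n + 1) powr g"
proof -
  have p: "(real n + 1) powr g \<ge> 1" using g1 by (intro ge_one_powr_ge_zero) auto
  then have f: "\<lfloor>(real n + 1) powr g\<rfloor> \<ge> 1" by linarith
  have e: "real (grid g n) = real_of_int \<lfloor>(real n + 1) powr g\<rfloor>" unfolding grid_def using f by simp
  show "(real n + 1) powr g - 1 < real (grid g n)" unfolding e by linarith
  show "real (grid g n) \<le> (real n + 1) powr g" unfolding e by linarith
qed

lemma grid_bounds_Suc: "(real n + 2) powr g - 1 < real (grid g (Suc n))" "real (grid g (Suc n)) \<le> (real n + 2) powr g"
proof -
  have e: "real (Suc n) + 1 = real n + 2" by simp
  show "(real n + 2) powr g - 1 < real (grid g (Suc n))" using grid_bounds(1)[of "Suc n"] unfolding e .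
  show "real (grid g (Suc n)) \<le> (real n + 2) powr g" using grid_bounds(2)[of "Suc n"] unfolding e .
qed

lemma grid_ge1: "1 \<le> grid g n"
proof -
  have p: "(real n + 1) powr g \<ge> 1" using g1 by (intro ge_one_powr_ge_zero) auto
  then show ?thesis unfolding grid_def by linarith
qed

lemma grid_mono: "grid g n < grid g (Suc n)"
proof -
  have "(real n + 1 + 1) powr g - (real n + 1) powr g \<ge> 1" using g1 by (intro powr_step_ge) auto
  then have "(real n + 1) powr g + 1 \<le> (real (Suc n) + 1) powr g" by simp
  then have "\<lfloor>(real n + 1) powr g\<rfloor> + 1 \<le> \<lfloor>(real (Suc n) + 1) powr g\<rfloor>" by linarith
  moreover have "\<lfloor>(real n + 1) powr g\<rfloor> \<ge> 0" by (simp)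
  ultimately show ?thesis unfolding grid_def by linarith
qed

lemma grid_smono: "strict_mono (grid g)"
  using grid_mono by (simp add: strict_mono_Suc_iff)

lemma grid_half: "real (grid g n) \<ge> (real n + 1) powr g / 2"
  using grid_bounds[of n] grid_ge1[of n] by linarith

lemma grid_summable: "summable (\<lambda>n. 1 / real (grid g n))"
proof (rule summable_comparison_test[where g="\<lambda>n. 2 * (real (Suc n)) powr (-g)"])
  have "summable (\<lambda>n. real n powr (-g))" using g1 by (simp add: summable_real_powr_iff)
  then have "summable (\<lambda>n. real (Suc n) powr (-g))" by (subst summable_Suc_iff)
  then show "summable (\<lambda>n. 2 * (real (Suc n)) powr (-g))" by (rule summable_mult)
  show "\<exists>N. \<forall>n\<ge>N. norm (1 / real (grid g n)) \<le> 2 * real (Suc n) powr - g"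
  proof (intro exI allI impI)
    fix n :: nat
    have pos: "(real n + 1) powr g > 0" by simp
    have "1 / real (grid g n) \<le> 1 / ((real n + 1) powr g / 2)"
      using grid_half[of n] pos by (intro frac_le) auto
    also have "\<dots> = 2 * (real n + 1) powr (-g)" by (simp add: powr_minus field_simps)
    finally show "norm (1 / real (grid g n)) \<le> 2 * real (Suc n) powr - g" by (simp add: add.commute)
  qed
qed

lemma grid_gap: "real (grid g (Suc n)) - real (grid g n) \<le> g * (real n + 2) powr (g - 1) + 1"
proof -
  have "(real n + 1 + 1) powr g - (real n + 1) powr g \<le> g * (real n + 1 + 1) powr (g-1)"
    using g1 by (intro powr_step_le) auto
  then show ?thesis using grid_bounds[of n] grid_bounds_Suc[of n] by (simp add: add.assoc)
qed

lemma grid_ratio: "(\<lambda>n. real (grid g (Suc n)) / real (grid g n)) \<longlonglongrightarrow> 1"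
proof (rule tendsto_sandwich[where f="\<lambda>_. 1" and h="\<lambda>n. (real n + 2) powr g / ((real n + 1) powr g - 1)"])
  show "eventually (\<lambda>n. 1 \<le> real (grid g (Suc n)) / real (grid g n)) sequentially"
  proof (intro always_eventually allI)
    fix n
    have "real (grid g n) > 0" "real (grid g n) \<le> real (grid g (Suc n))"
      using grid_ge1[of n] grid_mono[of n] by auto
    then show "1 \<le> real (grid g (Suc n)) / real (grid g n)" by (simp add: le_divide_eq_1)
  qed
  show "eventually (\<lambda>n. real (grid g (Suc n)) / real (grid g n) \<le> (real n + 2) powr g / ((real n + 1) powr g - 1)) sequentially"
  proof (rule eventually_mono[OF eventually_gt_at_top[of 0]])
    fix n :: nat assume "n > 0"
    then have "(real n + 1) powr g \<ge> (1+1) powr g" using g1 by (intro powr_mono2) auto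
    moreover have "(2::real) powr 1 < 2 powr g" using g1 by (intro powr_less_mono) auto
    moreover have "(1+1::real) = 2" by simp
    ultimately have q: "(real n + 1) powr g - 1 > 0" by simp
    have "real (grid g (Suc n)) \<le> (real n + 2) powr g" using grid_bounds_Suc[of n] by simp
    moreover have "real (grid g n) \<ge> (real n + 1) powr g - 1" using grid_bounds[of n] by simp
    ultimately show "real (grid g (Suc n)) / real (grid g n) \<le> (real n + 2) powr g / ((real n + 1) powr g - 1)"
      using q by (intro frac_le) auto
  qed
  show "(\<lambda>n. (real n + 2) powr g / ((real n + 1) powr g - 1)) \<longlonglongrightarrow> 1" using g1 by real_asymp
qed simp

lemma grid_gap_lim:
  assumes "d > 0" "g - 1 < g * d"
  shows "(\<lambda>n. (real (grid g (Suc n)) - real (grid g n)) / real (grid g (Suc n)) powr d) \<longlonglongrightarrow> 0"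
proof (rule tendsto_sandwich[where f="\<lambda>_. 0" and h="\<lambda>n. (g * (real n + 2) powr (g - 1) + 1) / ((real n + 2) powr g / 2) powr d"])
  show "eventually (\<lambda>n. 0 \<le> (real (grid g (Suc n)) - real (grid g n)) / real (grid g (Suc n)) powr d) sequentially"
    using grid_mono by (intro always_eventually allI) (simp add: less_imp_le)
  show "eventually (\<lambda>n. (real (grid g (Suc n)) - real (grid g n)) / real (grid g (Suc n)) powr d
       \<le> (g * (real n + 2) powr (g - 1) + 1) / ((real n + 2) powr g / 2) powr d) sequentially"
  proof (intro always_eventually allI)
    fix n
    have h: "real (grid g (Suc n)) \<ge> (real n + 2) powr g / 2" using grid_bounds_Suc[of n] grid_ge1[of "Suc n"] by linarith
    have p: "(real n + 2) powr g / 2 > 0" by simp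
    show "(real (grid g (Suc n)) - real (grid g n)) / real (grid g (Suc n)) powr d
       \<le> (g * (real n + 2) powr (g - 1) + 1) / ((real n + 2) powr g / 2) powr d"
      using grid_gap[of n] grid_mono[of n] h p assms(1)
      by (intro frac_le powr_mono2) auto
  qed
  show "(\<lambda>n. (g * (real n + 2) powr (g - 1) + 1) / ((real n + 2) powr g / 2) powr d) \<longlonglongrightarrow> 0"
    using g1 assms by real_asymp
qed simp

lemma grid_inf: "filterlim (\<lambda>n. real (grid g n)) at_top sequentially"
proof (rule filterlim_at_top_mono[where f="\<lambda>n. (real n + 1) powr g / 2"])
  show "filterlim (\<lambda>n. (real n + 1) powr g / 2) at_top sequentially" using g1 by real_asymp
  show "eventually (\<lambda>n. (real n + 1) powr g / 2 \<le> real (grid g n)) sequentially"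
    using grid_half by simp
qed

end

text \<open>For \<open>g \<le> b\<close>, the lower end of the tail window of the hypothesis at the grid point
  \<open>grid g (n+1)\<close> lies below the previous grid point \<open>grid g n\<close>.\<close>
lemma window_le:
  fixes g b :: real assumes g1: "g > 1" and gb: "g \<le> b"
  shows "nat \<lfloor>(real (grid g (Suc n)) powr (1/b) - 1) powr b\<rfloor> \<le> grid g n"
proof -
  define N where "N = real (grid g (Suc n))"
  define th where "th = g / b"
  have b0: "b > 0" using g1 gb by simp
  have th: "0 < th" "th \<le> 1" unfolding th_def using g1 gb by auto
  have N1: "N \<ge> 1" unfolding N_def using grid_ge1[OF g1] by simp
  have Nle: "N \<le> (real n + 2) powr g" unfolding N_def using grid_bounds_Suc[OF g1] by simp
  have "N powr (1/b) \<le> ((real n + 2) powr g) powr (1/b)" using Nle N1 b0 by (intro powr_mono2) auto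
  also have "\<dots> = (real n + 2) powr th" unfolding th_def by (simp add: powr_powr)
  also have "\<dots> = (real n + 1 + 1) powr th" by (simp add: add.assoc)
  also have "\<dots> \<le> (real n + 1) powr th + 1" using th by (intro powr_step_sub) auto
  finally have x1: "N powr (1/b) - 1 \<le> (real n + 1) powr th" by simp
  have x0: "N powr (1/b) - 1 \<ge> 0" using N1 b0 by (simp add: ge_one_powr_ge_zero)
  have "(N powr (1/b) - 1) powr b \<le> ((real n + 1) powr th) powr b" using x0 x1 b0 by (intro powr_mono2) auto
  also have "\<dots> = (real n + 1) powr g" unfolding th_def using b0 by (simp add: powr_powr)
  finally have "\<lfloor>(N powr (1/b) - 1) powr b\<rfloor> \<le> \<lfloor>(real n + 1) powr g\<rfloor>" by (rule floor_mono)
  then show ?thesis unfolding N_def grid_def by (simp add: nat_mono)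
qed

lemma find_block:
  assumes "strict_mono (f::nat \<Rightarrow> nat)" "f k \<le> L"
  shows "\<exists>n\<ge>k. f n \<le> L \<and> L < f (Suc n)"
proof -
  define A where "A = {n. f n \<le> L}"
  have fin: "finite A"
  proof -
    have "A \<subseteq> {..L}" unfolding A_def using strict_mono_imp_increasing[OF assms(1)] by (auto intro: le_trans)
    then show ?thesis by (rule finite_subset) auto
  qed
  have kA: "k \<in> A" unfolding A_def using assms by simp
  define n where "n = Max A"
  have "n \<in> A" unfolding n_def using fin kA by (intro Max_in) auto
  moreover have "k \<le> n" unfolding n_def using fin kA by simp
  moreover have "Suc n \<notin> A" unfolding n_def using fin Max_ge[OF fin] by (metis Suc_n_not_le_n)
  ultimately show ?thesis unfolding A_def by auto
qed

lemma grid_exponent_exists: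
  fixes b b' :: real
  assumes "b > 1" "b' > 0"
  shows "\<exists>g. 1 < g \<and> g \<le> b \<and> g - 1 < g * b'"
proof (intro exI conjI)
  define g where "g = min b (1 + b'/2)"
  show "1 < g" "g \<le> b" unfolding g_def using assms by auto
  have "g - 1 \<le> b'/2" unfolding g_def by linarith
  also have "\<dots> < 1 * b'" using assms by simp
  also have "\<dots> \<le> g * b'" using \<open>1 < g\<close> assms by (intro mult_right_mono) auto
  finally show "g - 1 < g * b'" .
qed

lemma tendsto_by_blocks:
  fixes f :: "nat \<Rightarrow> real" and m :: "nat \<Rightarrow> nat"
  assumes m: "strict_mono m" and l: "l \<ge> 0"
    and bounds: "\<And>t. t > 0 \<Longrightarrow> \<exists>lo hi. lo \<longlonglongrightarrow> l / (1 + t) \<and> hi \<longlonglongrightarrow> (1 + t) * l \<and>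
        (\<forall>n L. m n \<le> L \<and> L < m (Suc n) \<longrightarrow> lo n \<le> f L \<and> f L \<le> hi n)"
  shows "f \<longlonglongrightarrow> l"
proof (rule LIMSEQ_I)
  fix e :: real assume e: "e > 0"
  define t where "t = e / (l + 1)"
  have t: "t > 0" using e l by (simp add: t_def)
  have tl: "t * l < e"
    using e l by (simp add: t_def field_simps)
  have upper: "(1 + t) * l < l + e" using tl by (simp add: algebra_simps)
  have "l - l / (1 + t) = t * l / (1 + t)" using t by (simp add: field_simps)
  also have "\<dots> \<le> t * l" using t l by (simp add: divide_le_eq distrib_left)
  finally have lower: "l - e < l / (1 + t)" using tl by linarith
  obtain lo hi where lim: "lo \<longlonglongrightarrow> l / (1 + t)" "hi \<longlonglongrightarrow> (1 + t) * l"
    and sq: "\<And>n L. m n \<le> L \<Longrightarrow> L < m (Suc n) \<Longrightarrow> lo n \<le> f L \<and> f L \<le> hi n"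
    using bounds[OF t] by blast
  have "eventually (\<lambda>n. l - e < lo n \<and> hi n < l + e) sequentially"
    using order_tendstoD(1)[OF lim(1) lower] order_tendstoD(2)[OF lim(2) upper]
    by (rule eventually_conj)
  then obtain n0 where n0: "\<And>n. n \<ge> n0 \<Longrightarrow> l - e < lo n \<and> hi n < l + e"
    unfolding eventually_sequentially by blast
  show "\<exists>L0. \<forall>L\<ge>L0. norm (f L - l) < e"
  proof (intro exI allI impI)
    fix L assume "m n0 \<le> L"
    then obtain n where "n \<ge> n0" "m n \<le> L" "L < m (Suc n)" using find_block[OF m] by blast
    then show "norm (f L - l) < e" using n0 sq by fastforce
  qed
qed

lemma ratio_tendsto_one:
  fixes a b r :: "nat \<Rightarrow> real"
  assumes "\<And>n. 0 < b n" "\<And>n. a n \<le> b n" "\<And>n. b n - a n \<le> r n * b n" "r \<longlonglongrightarrow> 0"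
  shows "(\<lambda>n. a n / b n) \<longlonglongrightarrow> 1"
proof (rule tendsto_sandwich[where f="\<lambda>n. 1 - r n" and h="\<lambda>_. 1"])
  show "eventually (\<lambda>n. 1 - r n \<le> a n / b n) sequentially"
    using assms(1,3) by (intro always_eventually allI) (simp add: le_divide_eq algebra_simps)
  show "eventually (\<lambda>n. a n / b n \<le> 1) sequentially"
    using assms(1,2) by (intro always_eventually allI) (simp add: divide_le_eq_1)
  show "(\<lambda>n. 1 - r n) \<longlonglongrightarrow> 1" using tendsto_diff[OF tendsto_const assms(4)] by simp
qed simp

lemma square_sum_le:
  fixes a d t :: real assumes "t > 0"
  shows "(a + d)^2 \<le> (1 + t) * a^2 + (1 + 1/t) * d^2"
proof -
  have "0 \<le> (t * a - d)^2 / t" using assms by simp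
  also have "(t * a - d)^2 / t = t * a^2 - 2 * a * d + d^2 / t" using assms
    by (simp add: power2_eq_square field_simps)
  finally have "2 * a * d \<le> t * a^2 + d^2 / t" by simp
  then show ?thesis by (simp add: power2_eq_square algebra_simps)
qed

text \<open>The bounds of a block sandwich, rewritten in terms of ratios that converge along the
  grid: \<open>p, q\<close> stand for the block ends and \<open>a, b\<close> for the corresponding weight masses.\<close>
lemma rescaled_block_bounds:
  fixes x y Q p q a b t :: real
  assumes "0 < p" "0 < q" "0 < a" "0 < b" "0 < t"
  shows "(x - (1 + 1/t) * Q) / ((1 + t) * (q * b))
      = (x / (p * a) - (1 + 1/t) * (Q / (p * a))) * (a / b) / (q / p) / (1 + t)"
    and "((1 + t) * y + (1 + 1/t) * Q) / (p * a)
      = (1 + t) * (y / (q * a)) * (q / p) + (1 + 1/t) * (Q / (p * a))"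
proof -
  have "z / (p * a) * (a / b) / (q / p) / (1 + t) = z / ((1 + t) * (q * b))" for z
    using assms by (simp add: field_simps)
  then show "(x - (1 + 1/t) * Q) / ((1 + t) * (q * b))
      = (x / (p * a) - (1 + 1/t) * (Q / (p * a))) * (a / b) / (q / p) / (1 + t)"
    by (simp add: diff_divide_distrib[symmetric])
  show "((1 + t) * y + (1 + 1/t) * Q) / (p * a)
      = (1 + t) * (y / (q * a)) * (q / p) + (1 + 1/t) * (Q / (p * a))"
    using assms by (simp add: field_simps)
qed

lemma sum_split_at:
  fixes f :: "nat \<Rightarrow> real" and m L :: nat
  assumes "m \<le> L"
  shows "(\<Sum>i=1..L. f i) = (\<Sum>i=1..m. f i) + (\<Sum>i\<in>{m<..L}. f i)"
proof -
  have "{1..L} = {1..m} \<union> {m<..L}" "{1..m} \<inter> {m<..L} = {}" using assms by auto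
  then show ?thesis by (simp add: sum.union_disjoint)
qed

locale iid_matrix = prob_space M for M :: "'a measure" +
  fixes E :: "nat \<Rightarrow> nat \<Rightarrow> 'a \<Rightarrow> real" and u :: "nat \<Rightarrow> real" and \<sigma> :: real
  assumes partial_energy_pos: "\<forall>n\<ge>1. (\<Sum>i=1..n. (u i)\<^sup>2) > 0"
    and indep_entries: "indep_vars (\<lambda>_. borel) (\<lambda>(i,j). E i j) {(i,j). 1 \<le> i \<and> 1 \<le> j}"
    and identical_entries: "\<forall>i\<ge>1. \<forall>j\<ge>1. distr M borel (E i j) = distr M borel (E 1 1)"
    and integrable_entry: "integrable M (E 1 1)"
    and centered_entry: "expectation (E 1 1) = 0"
    and variance_entry: "variance (E 1 1) = \<sigma>\<^sup>2"
    and integrable4_entry: "integrable M (\<lambda>x. (E 1 1 x) ^ 4)"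
begin

lemma measurable_entry [measurable]:
  assumes "1 \<le> i" "1 \<le> j" shows "E i j \<in> borel_measurable M"
proof -
  have "(\<lambda>(i, j). E i j) (i, j) \<in> borel_measurable M"
    using indep_entries assms unfolding indep_vars_def by blast
  then show ?thesis by simp
qed

sublocale entries: centered_indep_family M "case_prod E" "{(i,j). 1 \<le> i \<and> 1 \<le> j}" "\<sigma>\<^sup>2"
  "expectation (\<lambda>x. (E 1 1 x) ^ 4)"
proof
  have same: "integrable M (\<lambda>x. h (E i j x)) \<and>
      expectation (\<lambda>x. h (E i j x)) = expectation (\<lambda>x. h (E 1 1 x))"
    if "1 \<le> i" "1 \<le> j" "h \<in> borel_measurable borel" "integrable M (\<lambda>x. h (E 1 1 x))"
    for i j and h :: "real \<Rightarrow> real"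
    using identically_distributed_integral[of "E i j" M "E 1 1" h] that
      identical_entries[rule_format, OF that(1,2)] by simp
  have i2: "integrable M (\<lambda>x. (E 1 1 x)^2)"
    using integrable_power_le_four[OF _ integrable4_entry, of 2] by simp
  have second: "expectation (\<lambda>x. (E 1 1 x)^2) = \<sigma>^2" using variance_entry centered_entry by simp
  fix k :: "nat \<times> nat" assume "k \<in> {(i,j). 1 \<le> i \<and> 1 \<le> j}"
  then obtain i j where k: "k = (i, j)" "1 \<le> i" "1 \<le> j" by blast
  show "integrable M (\<lambda>\<omega>. case_prod E k \<omega> ^ 4)"
    using same[OF k(2,3), of "\<lambda>x. x ^ 4"] integrable4_entry k(1) by simp
  show "expectation (case_prod E k) = 0"
    using same[OF k(2,3), of "\<lambda>x. x"] integrable_entry centered_entry k(1) by simp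
  show "expectation (\<lambda>\<omega>. case_prod E k \<omega> ^ 2) = \<sigma>\<^sup>2"
    using same[OF k(2,3), of "\<lambda>x. x ^ 2"] i2 second k(1) by simp
  show "expectation (\<lambda>\<omega>. case_prod E k \<omega> ^ 4) \<le> expectation (\<lambda>x. (E 1 1 x) ^ 4)"
    using same[OF k(2,3), of "\<lambda>x. x ^ 4"] integrable4_entry k(1) by simp
qed (use indep_entries in simp)

definition S :: "nat \<Rightarrow> real" where "S a = (\<Sum>i=1..a. (u i)\<^sup>2)"

definition W :: "nat \<Rightarrow> nat \<Rightarrow> 'a \<Rightarrow> real" where
  "W a b \<omega> = (\<Sum>j=1..b. (\<Sum>i=1..a. u i * E i j \<omega>)\<^sup>2)"

definition H :: "nat \<Rightarrow> nat \<Rightarrow> 'a \<Rightarrow> real" where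
  "H m N \<omega> = (\<Sum>j=1..N. \<Sum>i\<in>{m<..N}. (E i j \<omega>)\<^sup>2)"

lemma measurable_W [measurable]: "W a b \<in> borel_measurable M"
  unfolding W_def by measurable

lemma measurable_H [measurable]: "H m N \<in> borel_measurable M"
  unfolding H_def by measurable

lemma S_pos: "1 \<le> a \<Longrightarrow> S a > 0" using partial_energy_pos unfolding S_def by auto

lemma S_mono: "a \<le> b \<Longrightarrow> S a \<le> S b" unfolding S_def by (intro sum_mono2) auto

lemma W_nonneg: "0 \<le> W a b \<omega>" unfolding W_def by (simp add: sum_nonneg)

lemma H_nonneg: "0 \<le> H a b \<omega>" unfolding H_def by (simp add: sum_nonneg)

text \<open>Chebyshev bound for the quadratic form: the columns are independent blocks.\<close>
lemma W_deviation:
  assumes "1 \<le> a" "1 \<le> b" "e > 0"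
  shows "prob {\<omega> \<in> space M. e \<le> \<bar>W a b \<omega> / (b * S a) - \<sigma>^2\<bar>} \<le> entries.C4 / e^2 * (1 / b)"
proof -
  define Cs where "Cs = (\<lambda>j::nat. {1..a} \<times> {j})"
  define w where "w = (\<lambda>(i::nat, j::nat). u i)"
  have img: "{1..a} \<times> {j} = (\<lambda>i. (i,j)) ` {1..a}" for j :: nat by auto
  have lin: "(\<Sum>k\<in>Cs j. w k * case_prod E k \<omega>) = (\<Sum>i=1..a. u i * E i j \<omega>)" for j \<omega>
    unfolding Cs_def w_def by (subst img) (simp add: sum.reindex inj_on_def)
  have wts: "(\<Sum>k\<in>Cs j. (w k)^2) = S a" for j
    unfolding Cs_def w_def S_def by (subst img) (simp add: sum.reindex inj_on_def)
  have V: "b * S a = (\<Sum>j\<in>{1..b}. \<Sum>k\<in>Cs j. (w k)^2)" "b * S a > 0"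
    using S_pos[OF assms(1)] assms(2) by (simp_all add: wts)
  have "prob {\<omega> \<in> space M. e \<le> \<bar>(\<Sum>j\<in>{1..b}. (\<Sum>k\<in>Cs j. w k * case_prod E k \<omega>)^2) / (b * S a) - \<sigma>^2\<bar>}
      \<le> entries.C4 * (\<Sum>j\<in>{1..b}. (\<Sum>k\<in>Cs j. (w k)^2)^2) / (e * (b * S a))^2"
    using assms(3) V by (intro entries.block_chebyshev) (auto simp: Cs_def disjoint_family_on_def)
  then have "prob {\<omega> \<in> space M. e \<le> \<bar>W a b \<omega> / (b * S a) - \<sigma>^2\<bar>}
      \<le> entries.C4 * (\<Sum>j\<in>{1..b}. (\<Sum>k\<in>Cs j. (w k)^2)^2) / (e * (b * S a))^2"
    by (simp only: lin W_def)
  also have "\<dots> = entries.C4 / e^2 * (1 / b)"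
  proof -
    have "(\<Sum>j\<in>{1..b}. (\<Sum>k\<in>Cs j. (w k)^2)^2) = b * (S a)^2" by (simp add: wts)
    then show ?thesis using S_pos[OF assms(1)] assms(2) by (simp add: field_simps power2_eq_square)
  qed
  finally show ?thesis .
qed

text \<open>Chebyshev bound for the tail energy: all \<open>(N - m) N\<close> entries are independent.\<close>
lemma H_deviation:
  assumes "m < N" "e > 0"
  shows "prob {\<omega> \<in> space M. e \<le> \<bar>H m N \<omega> / real ((N - m) * N) - \<sigma>^2\<bar>}
    \<le> entries.C4 / e^2 * (1 / N)"
proof -
  define P where "P = {m<..N} \<times> {1..N}"
  define c where "c = real ((N - m) * N)"
  have cP: "real (card P) = c" unfolding P_def c_def by (simp add: card_cartesian_product)
  have cN: "real N \<le> c" and c0: "0 < c"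
    using assms(1) unfolding c_def of_nat_mult[symmetric] of_nat_le_iff by auto
  have H: "H m N \<omega> = (\<Sum>p\<in>P. (\<Sum>k\<in>{p}. 1 * case_prod E k \<omega>)^2)" for \<omega>
    unfolding H_def P_def
    by (subst sum.swap) (auto simp: sum.cartesian_product split_beta intro!: sum.cong)
  have Vc: "c = (\<Sum>p\<in>P. \<Sum>k\<in>{p}. (1::real)^2)" using cP by simp
  have "prob {\<omega> \<in> space M. e \<le> \<bar>(\<Sum>p\<in>P. (\<Sum>k\<in>{p}. 1 * case_prod E k \<omega>)^2) / c - \<sigma>^2\<bar>}
      \<le> entries.C4 * (\<Sum>p\<in>P. (\<Sum>k\<in>{p}. (1::real)^2)^2) / (e * c)^2"
    by (rule entries.block_chebyshev[OF _ _ _ assms(2) Vc c0]) (auto simp: P_def disjoint_family_on_def)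
  then have "prob {\<omega> \<in> space M. e \<le> \<bar>H m N \<omega> / c - \<sigma>^2\<bar>} \<le> entries.C4 * c / (e * c)^2"
    using cP by (simp only: H) simp
  also have "\<dots> = entries.C4 / e^2 * (1 / c)" using c0 by (simp add: field_simps power2_eq_square)
  also have "\<dots> \<le> entries.C4 / e^2 * (1 / N)"
    using cN c0 assms entries.C4_def
    by (intro mult_left_mono divide_left_mono) (auto simp: le_max_iff_disj)
  finally show ?thesis unfolding c_def .
qed

lemma AE_W_along:
  assumes a: "\<And>n. 1 \<le> a n" and b: "\<And>n. 1 \<le> b n" and sb: "summable (\<lambda>n. 1 / real (b n))"
  shows "AE \<omega> in M. (\<lambda>n. W (a n) (b n) \<omega> / (b n * S (a n))) \<longlonglongrightarrow> \<sigma>^2"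
proof (rule AE_tendsto_of_summable_deviation[OF _ sb])
  show "prob {\<omega> \<in> space M. e \<le> \<bar>W (a n) (b n) \<omega> / (b n * S (a n)) - \<sigma>^2\<bar>}
      \<le> entries.C4 / e^2 * (1 / b n)" if "e > 0" for e n
    using W_deviation[OF a b that] .
qed measurable

lemma AE_H_along:
  assumes mN: "\<And>n. m n < N n" and sN: "summable (\<lambda>n. 1 / real (N n))"
  shows "AE \<omega> in M. (\<lambda>n. H (m n) (N n) \<omega> / real ((N n - m n) * N n)) \<longlonglongrightarrow> \<sigma>^2"
proof (rule AE_tendsto_of_summable_deviation[OF _ sN])
  show "prob {\<omega> \<in> space M. e \<le> \<bar>H (m n) (N n) \<omega> / real ((N n - m n) * N n) - \<sigma>^2\<bar>}
      \<le> entries.C4 / e^2 * (1 / N n)" if "e > 0" for e n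
    using H_deviation[OF mN that] .
qed measurable

lemma tail_columns_le:
  assumes "m \<le> L" "L \<le> N"
  shows "(\<Sum>j=1..L. (\<Sum>i\<in>{m<..L}. u i * E i j \<omega>)^2) \<le> (S N - S m) * H m N \<omega>"
proof -
  have SN: "S N - S m = (\<Sum>i\<in>{m<..N}. (u i)^2)"
    unfolding S_def using sum_split_at[of m N] assms by simp
  have col: "(\<Sum>i\<in>{m<..L}. u i * E i j \<omega>)^2 \<le> (S N - S m) * (\<Sum>i\<in>{m<..N}. (E i j \<omega>)^2)" for j
  proof -
    have "(\<Sum>i\<in>{m<..L}. u i * E i j \<omega>)^2
        \<le> (\<Sum>i\<in>{m<..L}. (u i)^2) * (\<Sum>i\<in>{m<..L}. (E i j \<omega>)^2)"
      by (rule Cauchy_Schwarz_ineq_sum)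
    also have "\<dots> \<le> (S N - S m) * (\<Sum>i\<in>{m<..N}. (E i j \<omega>)^2)"
      unfolding SN using assms by (intro mult_mono sum_mono2 sum_nonneg) auto
    finally show ?thesis .
  qed
  have "(\<Sum>j=1..L. (\<Sum>i\<in>{m<..L}. u i * E i j \<omega>)^2)
      \<le> (\<Sum>j=1..L. (S N - S m) * (\<Sum>i\<in>{m<..N}. (E i j \<omega>)^2))"
    by (intro sum_mono col)
  also have "\<dots> \<le> (\<Sum>j=1..N. (S N - S m) * (\<Sum>i\<in>{m<..N}. (E i j \<omega>)^2))"
    using assms SN by (intro sum_mono2 mult_nonneg_nonneg sum_nonneg) (auto simp: sum_nonneg)
  also have "\<dots> = (S N - S m) * H m N \<omega>" unfolding H_def by (simp add: sum_distrib_left)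
  finally show ?thesis .
qed

text \<open>Comparison of the \<open>L \<times> L\<close> form with the forms at the block ends \<open>m \<le> L \<le> N\<close>:
  split each column sum at \<open>m\<close> into \<open>a + d\<close>, use \<open>(a + d)\<^sup>2 \<le> (1+t) a\<^sup>2 + (1 + 1/t) d\<^sup>2\<close>,
  and bound the tail parts \<open>d\<close> by the previous lemma.\<close>
lemma block_comparison:
  assumes "m \<le> L" "L \<le> N" "t > 0"
  shows "W L L \<omega> \<le> (1+t) * W m N \<omega> + (1 + 1/t) * ((S N - S m) * H m N \<omega>)"
    and "W m m \<omega> \<le> (1+t) * W L L \<omega> + (1 + 1/t) * ((S N - S m) * H m N \<omega>)"
proof -
  define a where "a j = (\<Sum>i=1..m. u i * E i j \<omega>)" for j
  define d where "d j = (\<Sum>i\<in>{m<..L}. u i * E i j \<omega>)" for j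
  have v: "(\<Sum>i=1..L. u i * E i j \<omega>) = a j + d j" for j
    unfolding a_def d_def using sum_split_at[OF assms(1)] by simp
  have D: "(\<Sum>j=1..L. (d j)^2) \<le> (S N - S m) * H m N \<omega>"
    unfolding d_def using tail_columns_le[OF assms(1,2)] .
  have aM: "(\<Sum>j=1..L. (a j)^2) \<le> W m N \<omega>" unfolding W_def a_def using assms by (intro sum_mono2) auto
  have "W L L \<omega> = (\<Sum>j=1..L. (a j + d j)^2)" unfolding W_def v ..
  also have "\<dots> \<le> (\<Sum>j=1..L. (1+t) * (a j)^2 + (1 + 1/t) * (d j)^2)"
    by (intro sum_mono square_sum_le assms(3))
  also have "\<dots> = (1+t) * (\<Sum>j=1..L. (a j)^2) + (1 + 1/t) * (\<Sum>j=1..L. (d j)^2)"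
    by (simp add: sum.distrib sum_distrib_left)
  also have "\<dots> \<le> (1+t) * W m N \<omega> + (1 + 1/t) * ((S N - S m) * H m N \<omega>)"
    using aM D assms(3) by (intro add_mono mult_left_mono) auto
  finally show "W L L \<omega> \<le> (1+t) * W m N \<omega> + (1 + 1/t) * ((S N - S m) * H m N \<omega>)" .
  have "W m m \<omega> = (\<Sum>j=1..m. (a j)^2)" unfolding W_def a_def ..
  also have "\<dots> \<le> (\<Sum>j=1..L. (a j)^2)" using assms by (intro sum_mono2) auto
  also have "\<dots> = (\<Sum>j=1..L. ((a j + d j) + (- d j))^2)" by simp
  also have "\<dots> \<le> (\<Sum>j=1..L. (1+t) * (a j + d j)^2 + (1 + 1/t) * (- d j)^2)"
    by (intro sum_mono square_sum_le assms(3))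
  also have "\<dots> = (1+t) * W L L \<omega> + (1 + 1/t) * (\<Sum>j=1..L. (d j)^2)"
    unfolding W_def v by (simp add: sum.distrib sum_distrib_left)
  also have "\<dots> \<le> (1+t) * W L L \<omega> + (1 + 1/t) * ((S N - S m) * H m N \<omega>)"
    using D assms(3) by (intro add_mono mult_left_mono) auto
  finally show "W m m \<omega> \<le> (1+t) * W L L \<omega> + (1 + 1/t) * ((S N - S m) * H m N \<omega>)" .
qed

lemma block_sandwich:
  fixes \<omega> :: 'a
  assumes "1 \<le> m" "m \<le> L" "L \<le> N" "t > 0"
  defines "Q \<equiv> (S N - S m) * H m N \<omega>"
  shows "W L L \<omega> / (L * S L) \<le> ((1 + t) * W m N \<omega> + (1 + 1/t) * Q) / (m * S m)"
    and "(W m m \<omega> - (1 + 1/t) * Q) / ((1 + t) * (N * S N)) \<le> W L L \<omega> / (L * S L)"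
proof -
  have mS: "0 < real m * S m" using S_pos assms(1) by simp
  have mL: "real m * S m \<le> real L * S L" and LN: "real L * S L \<le> real N * S N"
    using S_mono[of m L] S_mono[of L N] S_pos[OF assms(1)] assms(2,3) by (auto intro!: mult_mono)
  have Q0: "0 \<le> Q" unfolding Q_def using S_mono[of m N] assms(2,3) H_nonneg by simp
  note cmp = block_comparison[OF assms(2-4), of \<omega>, folded Q_def]
  have R0: "0 \<le> (1 + t) * W m N \<omega> + (1 + 1/t) * Q" using assms(4) Q0 W_nonneg by simp
  have "W L L \<omega> / (L * S L) \<le> ((1 + t) * W m N \<omega> + (1 + 1/t) * Q) / (L * S L)"
    using cmp(1) mS mL by (intro divide_right_mono) auto
  also have "\<dots> \<le> ((1 + t) * W m N \<omega> + (1 + 1/t) * Q) / (m * S m)"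
    using R0 mS mL by (intro divide_left_mono) auto
  finally show "W L L \<omega> / (L * S L) \<le> ((1 + t) * W m N \<omega> + (1 + 1/t) * Q) / (m * S m)" .
  show "(W m m \<omega> - (1 + 1/t) * Q) / ((1 + t) * (N * S N)) \<le> W L L \<omega> / (L * S L)"
  proof (cases "W m m \<omega> - (1 + 1/t) * Q \<le> 0")
    case True
    then have "(W m m \<omega> - (1 + 1/t) * Q) / ((1 + t) * (N * S N)) \<le> 0"
      using assms(4) mS mL LN by (intro divide_nonpos_pos) auto
    also have "0 \<le> W L L \<omega> / (L * S L)" using W_nonneg mS mL by simp
    finally show ?thesis .
  next
    case False
    have "(W m m \<omega> - (1 + 1/t) * Q) / ((1 + t) * (N * S N))
        = ((W m m \<omega> - (1 + 1/t) * Q) / (1 + t)) / (N * S N)" by simp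
    also have "\<dots> \<le> ((W m m \<omega> - (1 + 1/t) * Q) / (1 + t)) / (L * S L)"
      using False assms(4) mS mL LN by (intro divide_left_mono) auto
    also have "\<dots> \<le> W L L \<omega> / (L * S L)"
      using cmp(2) assms(4) mS mL by (intro divide_right_mono) (auto simp: divide_le_eq algebra_simps)
    finally show ?thesis .
  qed
qed

text \<open>The normalized tail contribution \<open>(S N - S m) H m N / (m S m)\<close> vanishes along the
  grid: the tail window of \<open>u\<close> has relative mass \<open>O(N\<^sup>-\<^sup>b\<^sup>')\<close>, the tail energy is about
  \<open>\<sigma>\<^sup>2 (N - m) N\<close>, and the gap \<open>N - m\<close> is \<open>o(N\<^sup>b\<^sup>')\<close>.\<close>
lemma tail_contribution_tendsto_zero:
  fixes m N :: "nat \<Rightarrow> nat" and c b' :: real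
  assumes mN: "\<And>n. m n < N n" and m1: "\<And>n. 1 \<le> m n" and c0: "c \<ge> 0"
    and ratio: "(\<lambda>n. real (N n) / real (m n)) \<longlonglongrightarrow> 1"
    and gap: "(\<lambda>n. (real (N n) - real (m n)) / real (N n) powr b') \<longlonglongrightarrow> 0"
    and win: "\<And>n. S (N n) - S (m n) \<le> c * S (N n) / real (N n) powr b'"
    and energy: "(\<lambda>n. H (m n) (N n) \<omega> / real ((N n - m n) * N n)) \<longlonglongrightarrow> \<sigma>^2"
    and mass: "(\<lambda>n. S (m n) / S (N n)) \<longlonglongrightarrow> 1"
  shows "(\<lambda>n. (S (N n) - S (m n)) * H (m n) (N n) \<omega> / (m n * S (m n))) \<longlonglongrightarrow> 0"
proof (rule tendsto_sandwich[OF _ _ tendsto_const])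
  define gp where "gp n = (real (N n) - real (m n)) / real (N n) powr b'" for n
  define h where "h n = H (m n) (N n) \<omega> / real ((N n - m n) * N n)" for n
  define B where "B n = c * gp n * h n * (real (N n) / real (m n)) / (S (m n) / S (N n))" for n
  have pos: "0 < S (m n)" "0 < S (N n)" "0 < real (m n)" "real (m n) < real (N n)" for n
    using S_pos m1[of n] mN[of n] by auto
  show "eventually (\<lambda>n. 0 \<le> (S (N n) - S (m n)) * H (m n) (N n) \<omega> / (m n * S (m n))) sequentially"
    using S_mono mN pos H_nonneg by (intro always_eventually allI) (simp add: less_imp_le)
  show "eventually (\<lambda>n. (S (N n) - S (m n)) * H (m n) (N n) \<omega> / (m n * S (m n)) \<le> B n) sequentially"
  proof (intro always_eventually allI)
    fix n
    have "(S (N n) - S (m n)) * H (m n) (N n) \<omega> \<le> (c * S (N n) / real (N n) powr b') * H (m n) (N n) \<omega>"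
      using win H_nonneg by (intro mult_right_mono) auto
    also have "\<dots> = B n * (m n * S (m n))"
      unfolding B_def gp_def h_def using pos[of n]
      by (simp add: of_nat_diff less_imp_le field_simps)
    finally show "(S (N n) - S (m n)) * H (m n) (N n) \<omega> / (m n * S (m n)) \<le> B n"
      using pos[of n] by (simp add: divide_le_eq)
  qed
  have "B \<longlonglongrightarrow> c * 0 * \<sigma>^2 * 1 / 1"
    unfolding B_def gp_def h_def using gap energy ratio mass by (intro tendsto_intros) auto
  then show "B \<longlonglongrightarrow> 0" by simp
qed

lemma tendsto_of_grid_limits:
  fixes m N :: "nat \<Rightarrow> nat" and c b' :: real and \<omega> :: 'a
  assumes smono: "strict_mono m" and Nm: "\<And>n. N n = m (Suc n)" and m1: "\<And>n. 1 \<le> m n"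
    and c0: "c \<ge> 0"
    and ratio: "(\<lambda>n. real (N n) / real (m n)) \<longlonglongrightarrow> 1"
    and gap: "(\<lambda>n. (real (N n) - real (m n)) / real (N n) powr b') \<longlonglongrightarrow> 0"
    and rho: "(\<lambda>n. c / real (N n) powr b') \<longlonglongrightarrow> 0"
    and win: "\<And>n. S (N n) - S (m n) \<le> c * S (N n) / real (N n) powr b'"
    and square: "(\<lambda>n. W (m n) (m n) \<omega> / (m n * S (m n))) \<longlonglongrightarrow> \<sigma>^2"
    and wide: "(\<lambda>n. W (m n) (N n) \<omega> / (N n * S (m n))) \<longlonglongrightarrow> \<sigma>^2"
    and energy: "(\<lambda>n. H (m n) (N n) \<omega> / real ((N n - m n) * N n)) \<longlonglongrightarrow> \<sigma>^2"
  shows "(\<lambda>L. W L L \<omega> / (L * S L)) \<longlonglongrightarrow> \<sigma>^2"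
proof -
  have mN: "m n < N n" for n using smono Nm by (simp add: strict_mono_def)
  have pos: "0 < S (m n)" "0 < S (N n)" "0 < real (m n)" "0 < real (N n)" for n
    using S_pos m1[of n] mN[of n] by auto
  have mass: "(\<lambda>n. S (m n) / S (N n)) \<longlonglongrightarrow> 1"
  proof (rule ratio_tendsto_one[OF _ _ _ rho])
    show "S (N n) - S (m n) \<le> c / real (N n) powr b' * S (N n)" for n using win[of n] by simp
  qed (use pos S_mono[OF less_imp_le[OF mN]] in auto)
  define D where "D n = (S (N n) - S (m n)) * H (m n) (N n) \<omega> / (m n * S (m n))" for n
  have D: "D \<longlonglongrightarrow> 0"
    unfolding D_def by (rule tail_contribution_tendsto_zero[OF mN m1 c0 ratio gap win energy mass])
  show ?thesis
  proof (rule tendsto_by_blocks[OF smono])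
    fix t :: real assume t: "t > 0"
    define Q where "Q n = (S (N n) - S (m n)) * H (m n) (N n) \<omega>" for n
    define lo where "lo n = (W (m n) (m n) \<omega> - (1 + 1/t) * Q n) / ((1 + t) * (N n * S (N n)))" for n
    define hi where "hi n = ((1 + t) * W (m n) (N n) \<omega> + (1 + 1/t) * Q n) / (m n * S (m n))" for n
    have lo_eq: "lo = (\<lambda>n. (W (m n) (m n) \<omega> / (m n * S (m n)) - (1 + 1/t) * D n)
        * (S (m n) / S (N n)) / (real (N n) / real (m n)) / (1 + t))"
      unfolding lo_def D_def Q_def using pos t by (intro ext rescaled_block_bounds(1))
    have hi_eq: "hi = (\<lambda>n. (1 + t) * (W (m n) (N n) \<omega> / (N n * S (m n))) * (real (N n) / real (m n))
        + (1 + 1/t) * D n)"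
      unfolding hi_def D_def Q_def using pos t by (intro ext rescaled_block_bounds(2))
    have "lo \<longlonglongrightarrow> (\<sigma>^2 - (1 + 1/t) * 0) * 1 / 1 / (1 + t)"
      unfolding lo_eq using square D mass ratio t by (intro tendsto_intros) auto
    moreover have "hi \<longlonglongrightarrow> (1 + t) * \<sigma>^2 * 1 + (1 + 1/t) * 0"
      unfolding hi_eq using wide D ratio by (intro tendsto_intros)
    moreover have "lo n \<le> W L L \<omega> / (L * S L) \<and> W L L \<omega> / (L * S L) \<le> hi n"
      if "m n \<le> L" "L < m (Suc n)" for n L
      using block_sandwich[OF m1 that(1) _ t, of "N n" \<omega>] that(2) Nm[of n]
      unfolding lo_def hi_def Q_def by simp
    ultimately show "\<exists>lo hi. lo \<longlonglongrightarrow> \<sigma>^2 / (1 + t) \<and> hi \<longlonglongrightarrow> (1 + t) * \<sigma>^2 \<and>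
        (\<forall>n L. m n \<le> L \<and> L < m (Suc n) \<longrightarrow> lo n \<le> W L L \<omega> / (L * S L) \<and> W L L \<omega> / (L * S L) \<le> hi n)"
      by (intro exI[of _ lo] exI[of _ hi]) simp
  qed simp
qed

text \<open>At consecutive grid points, the tail-window hypothesis bounds the relative mass of
  the weights between them, since the window reaches below the previous grid point.\<close>
lemma grid_tail_mass:
  assumes g: "1 < g" "g \<le> b" and c: "c \<ge> 0"
    and win: "\<forall>L::nat\<ge>1. (\<Sum>i\<in>{max 1 (nat \<lfloor>(real L powr (1/b) - 1) powr b\<rfloor>)..L}. (u i)\<^sup>2)
             / (\<Sum>i=1..L. (u i)\<^sup>2) \<le> c / real L powr b'"
  shows "S (grid g (Suc n)) - S (grid g n) \<le> c * S (grid g (Suc n)) / real (grid g (Suc n)) powr b'"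
proof -
  define m where "m = grid g n"
  define N where "N = grid g (Suc n)"
  define B where "B = nat \<lfloor>(real N powr (1/b) - 1) powr b\<rfloor>"
  have N1: "1 \<le> N" and mN: "m < N" unfolding m_def N_def using grid_ge1 grid_mono g(1) by auto
  have Bm: "B \<le> m" unfolding B_def N_def m_def using window_le[OF g] .
  have w: "(\<Sum>i\<in>{max 1 B..N}. (u i)\<^sup>2) / S N \<le> c / real N powr b'"
    using win N1 unfolding B_def S_def by auto
  have "S N - S m = (\<Sum>i\<in>{m<..N}. (u i)^2)"
    unfolding S_def using sum_split_at[of m N "\<lambda>i. (u i)^2"] mN by simp
  also have "\<dots> \<le> (\<Sum>i\<in>{max 1 B..N}. (u i)\<^sup>2)" using Bm by (intro sum_mono2) auto
  also have "\<dots> \<le> c / real N powr b' * S N"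
    using w S_pos[OF N1] by (simp add: pos_divide_le_eq)
  finally show ?thesis unfolding m_def N_def by simp
qed

text \<open>Almost sure convergence of the normalized quadratic form under the tail-window
  hypothesis: run the strong laws along a grid \<open>grid g\<close> with \<open>1 < g \<le> b\<close> and
  \<open>g - 1 < g b'\<close>, then interpolate between grid points.\<close>
lemma AE_normalized_form_tendsto:
  assumes b: "b > 1" "b' > 0" and c0: "c > 0"
    and win: "\<forall>L::nat\<ge>1. (\<Sum>i\<in>{max 1 (nat \<lfloor>(real L powr (1/b) - 1) powr b\<rfloor>)..L}. (u i)\<^sup>2)
             / (\<Sum>i=1..L. (u i)\<^sup>2) \<le> c / real L powr b'"
  shows "AE \<omega> in M. (\<lambda>L. W L L \<omega> / (real L * S L)) \<longlonglongrightarrow> \<sigma>^2"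
proof -
  obtain g where g: "1 < g" "g \<le> b" "g - 1 < g * b'" using grid_exponent_exists[OF b] by blast
  define m where "m = grid g"
  define N where "N n = m (Suc n)" for n
  have smono: "strict_mono m" and m1: "\<And>n. 1 \<le> m n" and N1: "\<And>n. 1 \<le> N n"
    and mN: "\<And>n. m n < N n"
    unfolding N_def m_def using grid_smono grid_ge1 grid_mono g(1) by auto
  have sm: "summable (\<lambda>n. 1 / real (m n))" unfolding m_def using grid_summable[OF g(1)] .
  then have sN: "summable (\<lambda>n. 1 / real (N n))" unfolding N_def by (subst summable_Suc_iff)
  have ratio: "(\<lambda>n. real (N n) / real (m n)) \<longlonglongrightarrow> 1"
    unfolding N_def m_def using grid_ratio[OF g(1)] .
  have gap: "(\<lambda>n. (real (N n) - real (m n)) / real (N n) powr b') \<longlonglongrightarrow> 0"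
    unfolding N_def m_def using grid_gap_lim[OF g(1) b(2) g(3)] .
  have "filterlim (\<lambda>n. real (N n)) at_top sequentially"
    unfolding N_def m_def using filterlim_compose[OF grid_inf[OF g(1)] filterlim_Suc]
    by (simp add: comp_def)
  moreover have "filterlim (\<lambda>x::real. c / x powr b') (nhds 0) at_top" using b(2) by real_asymp
  ultimately have rho: "(\<lambda>n. c / real (N n) powr b') \<longlonglongrightarrow> 0"
    using filterlim_compose by blast
  have tail: "\<And>n. S (N n) - S (m n) \<le> c * S (N n) / real (N n) powr b'"
    unfolding N_def m_def using grid_tail_mass[OF g(1,2) less_imp_le[OF c0] win] .
  have "AE \<omega> in M. (\<lambda>n. W (m n) (m n) \<omega> / (m n * S (m n))) \<longlonglongrightarrow> \<sigma>^2"
    and "AE \<omega> in M. (\<lambda>n. W (m n) (N n) \<omega> / (N n * S (m n))) \<longlonglongrightarrow> \<sigma>^2"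
    and "AE \<omega> in M. (\<lambda>n. H (m n) (N n) \<omega> / real ((N n - m n) * N n)) \<longlonglongrightarrow> \<sigma>^2"
    using AE_W_along[OF m1 m1 sm] AE_W_along[OF m1 N1 sN] AE_H_along[OF mN sN] by auto
  then show ?thesis
  proof eventually_elim
    case (elim \<omega>)
    show ?case
      by (rule tendsto_of_grid_limits[OF smono N_def m1 less_imp_le[OF c0] ratio gap rho tail elim])
  qed
qed

lemma normalized_form_eq:
  "(\<Sum>j=1..L. (\<Sum>i=1..L. (u i / sqrt (\<Sum>k=1..L. (u k)\<^sup>2)) * (E i j x / sqrt (real L)))\<^sup>2)
     = W L L x / (real L * S L)"
proof -
  have S0: "S L \<ge> 0" unfolding S_def by (simp add: sum_nonneg)
  have "(\<Sum>i=1..L. (u i / sqrt (S L)) * (E i j x / sqrt (real L)))\<^sup>2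
      = (\<Sum>i=1..L. u i * E i j x)\<^sup>2 / (real L * S L)" for j
    using S0 by (simp add: sum_divide_distrib[symmetric] power_divide power_mult_distrib mult.commute)
  then show ?thesis unfolding S_def[symmetric] W_def by (simp add: sum_divide_distrib)
qed

end

theorem theorem5:
  fixes P :: "'a measure" and E :: "nat \<Rightarrow> nat \<Rightarrow> 'a \<Rightarrow> real"
    and u :: "nat \<Rightarrow> real" and \<sigma> :: real
  assumes "prob_space P"
    and "\<forall>M\<ge>1. (\<Sum>i=1..M. (u i)\<^sup>2) > 0"
    and "\<exists>\<beta>>1. \<exists>\<beta>'>0. \<exists>c>0. \<forall>M::nat\<ge>1.
           (\<Sum>i\<in>{max 1 (nat \<lfloor>(real M powr (1/\<beta>) - 1) powr \<beta>\<rfloor>)..M}. (u i)\<^sup>2)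
             / (\<Sum>i=1..M. (u i)\<^sup>2) \<le> c / real M powr \<beta>'"
    and "prob_space.indep_vars P (\<lambda>_. borel) (\<lambda>(i,j). E i j) {(i,j). 1 \<le> i \<and> 1 \<le> j}"
    and "\<forall>i\<ge>1. \<forall>j\<ge>1. distr P borel (E i j) = distr P borel (E 1 1)"
    and "integrable P (E 1 1)"
    and "prob_space.expectation P (E 1 1) = 0"
    and "prob_space.variance P (E 1 1) = \<sigma>\<^sup>2"
    and "integrable P (\<lambda>x. (E 1 1 x) ^ 4)"
  shows "AE x in P. (\<lambda>M. \<Sum>j=1..M. (\<Sum>i=1..M.
            (u i / sqrt (\<Sum>k=1..M. (u k)\<^sup>2)) * (E i j x / sqrt (real M)))\<^sup>2)
          \<longlonglongrightarrow> \<sigma>\<^sup>2"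
proof -
  interpret iid_matrix P E u \<sigma>
    using assms(1,2,4-9) unfolding iid_matrix_def iid_matrix_axioms_def by blast
  obtain \<beta> \<beta>' c where "\<beta> > 1" "\<beta>' > 0" "c > 0" and "\<forall>M::nat\<ge>1.
      (\<Sum>i\<in>{max 1 (nat \<lfloor>(real M powr (1/\<beta>) - 1) powr \<beta>\<rfloor>)..M}. (u i)\<^sup>2)
        / (\<Sum>i=1..M. (u i)\<^sup>2) \<le> c / real M powr \<beta>'"
    using assms(3) by blast
  then show ?thesis unfolding normalized_form_eq by (rule AE_normalized_form_tendsto)
qed

end
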